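(* Consider an iteration $t$ of the NSGA-II optimizing \textsc{OneMinMax} (any population size $N$, any offspring generation). All individuals of $R_t$ have rank one, and crowding distances are computed with respect to $R_t$. Let $v_1^{\min}=\min\{f_1(x):x\in R_t\}$, $v_1^{\max}=\max\{f_1(x):x\in R_t\}$, and assume $v_1^{\max}>v_1^{\min}$. Let $V=f(R_t)$, $V^+_{\mathrm{in}}=\{(v_1,v_2)\in V:\exists y\in R_t,\ f(y)=(v_1+1,v_2-1)\}$ and $V^-_{\mathrm{in}}=\{(v_1,v_2)\in V:\exists y\in R_t,\ f(y)=(v_1-1,v_2+1)\}$. Then for every $(v_1,v_2)\in V\setminus(V^+_{\mathrm{in}}\cap V^-_{\mathrm{in}})$ there is an individual $x\in R_t$ with $f(x)=(v_1,v_2)$ and $\mathrm{cDis}(x)\ge \frac{2}{v_1^{\max}-v_1^{\min}}$ (regardless of how ties are broken in the sorting steps of the crowding distance computation).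
   Context: Search space $\{0,1\}^n$; objective $f=(f_1,f_2)$, both maximized. Populations are multisets of bit strings; $f(P)=\{f(x):x\in P\}$. Crowding distance of the individuals of a set $S$ (computed with respect to $S$): start with $\mathrm{cDis}(x)=0$ for all $x\in S$; for each $i\in\{1,2\}$, sort $S$ in ascending $f_i$-value as $S_{i.1},\dots,S_{i.|S|}$ (ties broken arbitrarily), set $\mathrm{cDis}(S_{i.1})=\mathrm{cDis}(S_{i.|S|})=+\infty$, and for $2\le j\le |S|-1$ add $\frac{f_i(S_{i.j+1})-f_i(S_{i.j-1})}{f_i(S_{i.|S|})-f_i(S_{i.1})}$ to $\mathrm{cDis}(S_{i.j})$. In the NSGA-II, $R_t=P_t\cup Q_t$ denotes the multiset union of the parent population $P_t$ and offspring population $Q_t$ in iteration $t$, each of size $N$. \textsc{OneMinMax}: $f(x)=(n-\sum_{i=1}^n x_i,\ \sum_{i=1}^n x_i)$; no bit string strictly dominates another, so all individuals of any population have rank one in non-dominated sorting. *)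

theory Defs
  imports "HOL-Library.Extended_Real"
begin

text \<open>Bit strings are boolean lists of length n. A population (multiset) is
  represented as a list; its individuals are identified by their positions.\<close>

definition ones :: "bool list \<Rightarrow> nat" where
  "ones x = count_list x True"

definition omm1 :: "nat \<Rightarrow> bool list \<Rightarrow> int" where
  "omm1 n x = int n - int (ones x)"

definition omm2 :: "bool list \<Rightarrow> int" where
  "omm2 x = int (ones x)"

definition omm :: "nat \<Rightarrow> bool list \<Rightarrow> int \<times> int" where
  "omm n x = (omm1 n x, omm2 x)"

text \<open>sigma is a sorting of the individuals of S (positions 0..|S|-1) in ascending
  g-value, ties broken arbitrarily: sigma j is the position of the (j+1)-th individual.\<close>
definition sorting_by :: "('a \<Rightarrow> int) \<Rightarrow> 'a list \<Rightarrow> (nat \<Rightarrow> nat) \<Rightarrow> bool" where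
  "sorting_by g S sigma \<longleftrightarrow>
     bij_betw sigma {..<length S} {..<length S} \<and>
     (\<forall>j. Suc j < length S \<longrightarrow> g (S ! sigma j) \<le> g (S ! sigma (Suc j)))"

definition cdis_obj :: "('a \<Rightarrow> int) \<Rightarrow> 'a list \<Rightarrow> (nat \<Rightarrow> nat) \<Rightarrow> nat \<Rightarrow> ereal" where
  "cdis_obj g S sigma k =
    (let m = length S; j = the_inv_into {..<m} sigma k in
     if j = 0 \<or> j = m - 1 then \<infinity>
     else ereal (real_of_int (g (S ! sigma (Suc j)) - g (S ! sigma (j - 1)))
                 / real_of_int (g (S ! sigma (m - 1)) - g (S ! sigma 0))))"

definition cDis :: "('a \<Rightarrow> int) \<Rightarrow> ('a \<Rightarrow> int) \<Rightarrow> 'a list \<Rightarrow> (nat \<Rightarrow> nat) \<Rightarrow> (nat \<Rightarrow> nat)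
                     \<Rightarrow> nat \<Rightarrow> ereal" where
  "cDis g1 g2 S sigma1 sigma2 k = cdis_obj g1 S sigma1 k + cdis_obj g2 S sigma2 k"

end

theory Submission
  imports Defs
begin

text \<open>If \<open>v\<^sub>1 + 1\<close> is not attained, the last individual with
  \<open>f\<^sub>1 = v\<^sub>1\<close> has its successor at \<open>f\<^sub>1 \<ge> v\<^sub>1 + 2\<close> and its predecessor at \<open>f\<^sub>1 \<le> v\<^sub>1\<close>, so its
  \<open>f\<^sub>1\<close>-contribution is at least \<open>2 / (v\<^sub>1\<^sup>max - v\<^sub>1\<^sup>min)\<close> (or it is an end point and gets \<open>\<infinity>\<close>);
  symmetrically for the first such individual if \<open>v\<^sub>1 - 1\<close> is not attained. On OneMinMax
  \<open>f\<^sub>2 = n - f\<^sub>1\<close>, so a value outside \<open>V\<^sup>+\<^sub>in \<inter> V\<^sup>-\<^sub>in\<close> misses one of these neighbours, and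
  the \<open>f\<^sub>2\<close>-contribution is nonnegative.\<close>

lemma sorting_by_less:
  assumes "sorting_by g S s" "j < length S"
  shows "s j < length S"
  using assms unfolding sorting_by_def bij_betw_def by auto

lemma sorting_by_surj:
  assumes "sorting_by g S s" "i < length S"
  obtains j where "j < length S" "s j = i"
  using assms unfolding sorting_by_def bij_betw_def by (metis imageE lessThan_iff)

lemma sorting_by_mono:
  assumes "sorting_by g S s" "i \<le> j" "j < length S"
  shows "g (S ! s i) \<le> g (S ! s j)"
  using assms(2,3)
proof (induction j rule: dec_induct)
  case (step j)
  then have "g (S ! s j) \<le> g (S ! s (Suc j))"
    using assms(1) unfolding sorting_by_def by auto
  with step show ?case by simp
qed simp

lemma sorting_by_obtain_value:
  assumes "sorting_by g S s" "x \<in> set S"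
  obtains j where "j < length S" "g (S ! s j) = g x"
proof -
  obtain i where "i < length S" "S ! i = x" using assms(2) by (auto simp: in_set_conv_nth)
  with sorting_by_surj[OF assms(1)] show ?thesis using that by metis
qed

lemma sorting_by_Min:
  assumes "sorting_by g S s" "S \<noteq> []"
  shows "Min (g ` set S) = g (S ! s 0)"
proof (rule Min_eqI)
  show "g (S ! s 0) \<in> g ` set S" using sorting_by_less[OF assms(1)] assms(2) by simp
next
  fix y assume "y \<in> g ` set S"
  then obtain x where "x \<in> set S" "y = g x" by blast
  then show "g (S ! s 0) \<le> y"
    by (metis sorting_by_obtain_value[OF assms(1)] sorting_by_mono[OF assms(1)] le0)
qed simp

lemma sorting_by_Max:
  assumes "sorting_by g S s" "S \<noteq> []"
  shows "Max (g ` set S) = g (S ! s (length S - 1))"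
proof (rule Max_eqI)
  show "g (S ! s (length S - 1)) \<in> g ` set S" using sorting_by_less[OF assms(1)] assms(2) by simp
next
  fix y assume "y \<in> g ` set S"
  then obtain x where "x \<in> set S" "y = g x" by blast
  moreover have "j \<le> length S - 1" "length S - 1 < length S" if "j < length S" for j
    using that assms(2) by auto
  ultimately show "y \<le> g (S ! s (length S - 1))"
    by (metis sorting_by_obtain_value[OF assms(1)] sorting_by_mono[OF assms(1)])
qed simp

lemma cdis_obj_sorted:
  assumes "sorting_by g S s" "j < length S"
  shows "cdis_obj g S s (s j) =
    (if j = 0 \<or> j = length S - 1 then \<infinity>
     else ereal (real_of_int (g (S ! s (Suc j)) - g (S ! s (j - 1)))
                 / real_of_int (g (S ! s (length S - 1)) - g (S ! s 0))))"
proof -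
  have "the_inv_into {..<length S} s (s j) = j"
    using assms unfolding sorting_by_def by (meson bij_betw_imp_inj_on lessThan_iff the_inv_into_f_f)
  then show ?thesis unfolding cdis_obj_def Let_def by simp
qed

lemma cdis_obj_nonneg:
  assumes "sorting_by g S s" "k < length S"
  shows "cdis_obj g S s k \<ge> 0"
proof -
  obtain j where j: "j < length S" "s j = k" using sorting_by_surj[OF assms] .
  have "g (S ! s (j - 1)) \<le> g (S ! s (Suc j))" if "Suc j < length S"
    using sorting_by_mono[OF assms(1)] that by simp
  moreover have "g (S ! s 0) \<le> g (S ! s (length S - 1))"
    using sorting_by_mono[OF assms(1)] j(1) by simp
  ultimately show ?thesis
    using j cdis_obj_sorted[OF assms(1) j(1)] by (auto intro: divide_nonneg_nonneg)
qed

lemma cdis_obj_ge_if_gap: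
  fixes c :: real
  assumes "sorting_by g S s" "j < length S"
    and range: "g (S ! s (length S - 1)) - g (S ! s 0) = D" "D > 0"
    and gap: "0 < j \<Longrightarrow> Suc j < length S \<Longrightarrow> c \<le> real_of_int (g (S ! s (Suc j)) - g (S ! s (j - 1)))"
  shows "cdis_obj g S s (s j) \<ge> ereal (c / real_of_int D)"
proof (cases "j = 0 \<or> j = length S - 1")
  case False
  then have "c \<le> real_of_int (g (S ! s (Suc j)) - g (S ! s (j - 1)))"
    using gap assms(2) by (metis Suc_lessI bot_nat_0.not_eq_extremum diff_Suc_1)
  then have "c / real_of_int D \<le> real_of_int (g (S ! s (Suc j)) - g (S ! s (j - 1))) / real_of_int D"
    using range(2) by (simp add: divide_right_mono)
  then show ?thesis using False range(1) cdis_obj_sorted[OF assms(1,2)] by simp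
qed (use cdis_obj_sorted[OF assms(1,2)] in simp)

lemma cdis_obj_ge_if_successor_value_missing:
  assumes s: "sorting_by g S s" and "x \<in> set S" "g x + 1 \<notin> g ` set S"
    and range: "g (S ! s (length S - 1)) - g (S ! s 0) = D" "D > 0"
  obtains j where "j < length S" "g (S ! s j) = g x" "cdis_obj g S s (s j) \<ge> ereal (2 / real_of_int D)"
proof -
  define J where "J = {j. j < length S \<and> g (S ! s j) = g x}"
  have "J \<noteq> {}" using sorting_by_obtain_value[OF s \<open>x \<in> set S\<close>] unfolding J_def by blast
  moreover have "finite J" unfolding J_def by simp
  ultimately have jJ: "Max J \<in> J" by simp
  have "cdis_obj g S s (s (Max J)) \<ge> ereal (2 / real_of_int D)"
  proof (rule cdis_obj_ge_if_gap[OF s _ range])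
    show "Max J < length S" using jJ J_def by simp
    assume "Suc (Max J) < length S"
    then have "Suc (Max J) \<notin> J" "S ! s (Suc (Max J)) \<in> set S"
      using \<open>finite J\<close> sorting_by_less[OF s] by (auto dest: Max_ge)
    moreover have "g (S ! s (Max J)) \<le> g (S ! s (Suc (Max J)))"
      "g (S ! s (Max J - 1)) \<le> g (S ! s (Max J))"
      using sorting_by_mono[OF s] \<open>Suc (Max J) < length S\<close> by auto
    ultimately have "g (S ! s (Suc (Max J))) - g (S ! s (Max J - 1)) \<ge> 2"
      using jJ assms(3) \<open>Suc (Max J) < length S\<close> unfolding J_def by force
    then show "2 \<le> real_of_int (g (S ! s (Suc (Max J))) - g (S ! s (Max J - 1)))" by simp
  qed
  with jJ that show ?thesis unfolding J_def by blast
qed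

lemma cdis_obj_ge_if_predecessor_value_missing:
  assumes s: "sorting_by g S s" and "x \<in> set S" "g x - 1 \<notin> g ` set S"
    and range: "g (S ! s (length S - 1)) - g (S ! s 0) = D" "D > 0"
  obtains j where "j < length S" "g (S ! s j) = g x" "cdis_obj g S s (s j) \<ge> ereal (2 / real_of_int D)"
proof -
  define J where "J = {j. j < length S \<and> g (S ! s j) = g x}"
  have "J \<noteq> {}" using sorting_by_obtain_value[OF s \<open>x \<in> set S\<close>] unfolding J_def by blast
  moreover have "finite J" unfolding J_def by simp
  ultimately have jJ: "Min J \<in> J" by simp
  have "cdis_obj g S s (s (Min J)) \<ge> ereal (2 / real_of_int D)"
  proof (rule cdis_obj_ge_if_gap[OF s _ range])
    show "Min J < length S" using jJ J_def by simp
    assume "0 < Min J" "Suc (Min J) < length S"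
    then have "Min J - 1 \<notin> J" "S ! s (Min J - 1) \<in> set S"
      using \<open>finite J\<close> sorting_by_less[OF s] by (auto dest: Min_le)
    moreover have "g (S ! s (Min J)) \<le> g (S ! s (Suc (Min J)))"
      "g (S ! s (Min J - 1)) \<le> g (S ! s (Min J))"
      using sorting_by_mono[OF s] \<open>Suc (Min J) < length S\<close> by auto
    ultimately have "g (S ! s (Suc (Min J))) - g (S ! s (Min J - 1)) \<ge> 2"
      using jJ assms(3) \<open>Suc (Min J) < length S\<close> unfolding J_def by force
    then show "2 \<le> real_of_int (g (S ! s (Suc (Min J))) - g (S ! s (Min J - 1)))" by simp
  qed
  with jJ that show ?thesis unfolding J_def by blast
qed

lemma omm_eq_iff: "omm n y = (a, b) \<longleftrightarrow> omm1 n y = a \<and> b = int n - a"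
  unfolding omm_def omm1_def omm2_def by auto

lemma omm2_eq: "omm2 y = int n - omm1 n y"
  unfolding omm1_def omm2_def by simp

theorem lemma3:
  fixes n N :: nat and P Q R :: "bool list list" and sigma1 sigma2 :: "nat \<Rightarrow> nat"
    and vmin vmax :: int
  assumes "length P = N" and "length Q = N" and "R = P @ Q"
    and "\<forall>x\<in>set R. length x = n"
    and "sorting_by (omm1 n) R sigma1" and "sorting_by omm2 R sigma2"
    and "vmin = Min (omm1 n ` set R)" and "vmax = Max (omm1 n ` set R)"
    and "vmax > vmin"
  shows "\<forall>v \<in> omm n ` set R
           - ({(v1, v2) \<in> omm n ` set R. \<exists>y\<in>set R. omm n y = (v1 + 1, v2 - 1)}
              \<inter> {(v1, v2) \<in> omm n ` set R. \<exists>y\<in>set R. omm n y = (v1 - 1, v2 + 1)}).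
           \<exists>k < length R. omm n (R ! k) = v \<and>
             cDis (omm1 n) omm2 R sigma1 sigma2 k \<ge> ereal (2 / real_of_int (vmax - vmin))"
proof
  fix v assume v: "v \<in> omm n ` set R
           - ({(v1, v2) \<in> omm n ` set R. \<exists>y\<in>set R. omm n y = (v1 + 1, v2 - 1)}
              \<inter> {(v1, v2) \<in> omm n ` set R. \<exists>y\<in>set R. omm n y = (v1 - 1, v2 + 1)})"
  then obtain x where x: "x \<in> set R" "v = omm n x" by blast
  then have "R \<noteq> []" by auto
  have range: "omm1 n (R ! sigma1 (length R - 1)) - omm1 n (R ! sigma1 0) = vmax - vmin"
    using assms(7,8) sorting_by_Min[OF assms(5) \<open>R \<noteq> []\<close>] sorting_by_Max[OF assms(5) \<open>R \<noteq> []\<close>]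
    by simp
  have "omm1 n x + 1 \<notin> omm1 n ` set R \<or> omm1 n x - 1 \<notin> omm1 n ` set R"
    using v x by (auto simp: omm_eq_iff omm_def omm2_eq[of _ n])
  then obtain j where j: "j < length R" "omm1 n (R ! sigma1 j) = omm1 n x"
    "cdis_obj (omm1 n) R sigma1 (sigma1 j) \<ge> ereal (2 / real_of_int (vmax - vmin))"
    using cdis_obj_ge_if_successor_value_missing[OF assms(5) x(1) _ range]
      cdis_obj_ge_if_predecessor_value_missing[OF assms(5) x(1) _ range] assms(9)
    by (metis diff_gt_0_iff_gt)
  have k: "sigma1 j < length R" using sorting_by_less[OF assms(5) j(1)] .
  have "cDis (omm1 n) omm2 R sigma1 sigma2 (sigma1 j) \<ge> ereal (2 / real_of_int (vmax - vmin)) + 0"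
    unfolding cDis_def using j(3) cdis_obj_nonneg[OF assms(6) k] by (rule add_mono)
  moreover have "omm n (R ! sigma1 j) = v"
    using j(2) x(2) by (simp add: omm_def omm2_eq[of _ n])
  ultimately show "\<exists>k < length R. omm n (R ! k) = v \<and>
      cDis (omm1 n) omm2 R sigma1 sigma2 k \<ge> ereal (2 / real_of_int (vmax - vmin))"
    using k by auto
qed

end
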